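(* Assume the setting below and $p>\sum_{k=0}^{N-1}L_k$. For $0\le j\le N-1$ and $x\in\mathbb R$ define $$\alpha_{GB,j}(x)=\sum_{k=j}^{j+N-1}L^G_k\,C\left\lceil\frac{x-o_{k,j}+L^G_k+\sum_{q=j}^{k}L_q}{p-\sum_{q=j}^{j+N-1}L_q}\right\rceil .$$ Then for all $s\in\mathbb R$ and $t\ge0$, $$C\cdot\Delta t_{GB}(s,s+t)\le\max_{0\le j\le N-1}\alpha_{GB,j}\big(t-\Delta t_{ST}(s,s+t)\big).$$
   Context: Fix an output port with physical link rate $C>0$. Its gate control list (GCL) is periodic with period $p>0$ and contains $N\ge 1$ scheduled-traffic (ST) windows per period. Window $k\in\{0,\dots,N-1\}$ is the interval $[o_k,o_k+L_k)$, where $0\le o_0<o_1<\dots<o_{N-1}<p$, $L_k\ge 0$, $o_k+L_k\le o_{k+1}$ for $k<N-1$ and $o_{N-1}+L_{N-1}\le o_0+p$. Indices are extended to all integers periodically: $o_{k+N}=o_k+p$, $L_{k+N}=L_k$. Relative offsets are $o_{j,i}=o_j-o_i$. Let $S=\bigcup_{k\in\mathbb Z}[o_k,o_k+L_k)$ and for $s\le t$ let $\Delta t_{ST}(s,t)$ be the Lebesgue measure of $S\cap[s,t]$. Guard bands: for each $k$, $L^G_k=\min\{\ell/C,\ o_k-(o_{k-1}+L_{k-1})\}$, where $\ell>0$ is the maximal frame size of the AVB flows of classes $M_1,\dots,M_i$ competing at the port; thus $L^G_{k+N}=L^G_k$ and the guard band of window $k$ is $[o_k-L^G_k,o_k)$.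 Let $G=\bigcup_{k\in\mathbb Z}[o_k-L^G_k,o_k)$ and for $s\le t$ let $\Delta t_{GB}(s,t)$ be the Lebesgue measure of $G\cap[s,t]$. *)

theory Defs
  imports "HOL-Analysis.Analysis"
begin

text \<open>GCL with N windows per period p; offsets o k and lengths L k given for k < N,
  extended periodically to all integer indices.\<close>

definition oe :: "nat \<Rightarrow> real \<Rightarrow> (nat \<Rightarrow> real) \<Rightarrow> int \<Rightarrow> real" where
  "oe N p off k = off (nat (k mod int N)) + p * of_int (k div int N)"

definition Le :: "nat \<Rightarrow> (nat \<Rightarrow> real) \<Rightarrow> int \<Rightarrow> real" where
  "Le N L k = L (nat (k mod int N))"

text \<open>Guard band length of window k; ell is the maximal AVB frame size.\<close>
definition LG :: "nat \<Rightarrow> real \<Rightarrow> (nat \<Rightarrow> real) \<Rightarrow> (nat \<Rightarrow> real) \<Rightarrow> real \<Rightarrow> real \<Rightarrow> int \<Rightarrow> real" where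
  "LG N p off L C ell k = min (ell / C) (oe N p off k - (oe N p off (k - 1) + Le N L (k - 1)))"

definition ST_set :: "nat \<Rightarrow> real \<Rightarrow> (nat \<Rightarrow> real) \<Rightarrow> (nat \<Rightarrow> real) \<Rightarrow> real set" where
  "ST_set N p off L = (\<Union>k::int. {oe N p off k ..< oe N p off k + Le N L k})"

definition GB_set :: "nat \<Rightarrow> real \<Rightarrow> (nat \<Rightarrow> real) \<Rightarrow> (nat \<Rightarrow> real) \<Rightarrow> real \<Rightarrow> real \<Rightarrow> real set" where
  "GB_set N p off L C ell = (\<Union>k::int. {oe N p off k - LG N p off L C ell k ..< oe N p off k})"

definition dt_ST :: "nat \<Rightarrow> real \<Rightarrow> (nat \<Rightarrow> real) \<Rightarrow> (nat \<Rightarrow> real) \<Rightarrow> real \<Rightarrow> real \<Rightarrow> real" where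
  "dt_ST N p off L s t = measure lebesgue (ST_set N p off L \<inter> {s..t})"

definition dt_GB :: "nat \<Rightarrow> real \<Rightarrow> (nat \<Rightarrow> real) \<Rightarrow> (nat \<Rightarrow> real) \<Rightarrow> real \<Rightarrow> real \<Rightarrow> real \<Rightarrow> real \<Rightarrow> real" where
  "dt_GB N p off L C ell s t = measure lebesgue (GB_set N p off L C ell \<inter> {s..t})"

definition alpha_GB :: "nat \<Rightarrow> real \<Rightarrow> (nat \<Rightarrow> real) \<Rightarrow> (nat \<Rightarrow> real) \<Rightarrow> real \<Rightarrow> real \<Rightarrow> nat \<Rightarrow> real \<Rightarrow> real" where
  "alpha_GB N p off L C ell j x =
     (\<Sum>k \<in> {int j .. int j + int N - 1}.
        LG N p off L C ell k * C *
        of_int \<lceil>(x - (oe N p off k - oe N p off (int j)) + LG N p off L C ell k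
                  + (\<Sum>q \<in> {int j .. k}. Le N L q))
                / (p - (\<Sum>q \<in> {int j .. int j + int N - 1}. Le N L q))\<rceil>)"

end

theory Submission
  imports Defs
begin

text \<open>Let J be the first window starting at or after s. Between o_J and the guard band of
  a window K \<ge> J the link carries ST traffic only during the windows J, ..., K - 1, so if
  guard band K meets [s, s + t], the non-ST time of [s, s + t] exceeds
  o_K - L^G_K - o_J - (L_J + ... + L_(K-1)). Writing K = k + N m with J \<le> k < J + N, every
  full period adds p - (L_0 + ... + L_(N-1)) to this bound, so at most the ceiling in the k-th
  summand of alpha_(GB,J) many copies of guard band k are met, each contributing at most
  L^G_k. By periodicity alpha_(GB,J) = alpha_(GB,j) for j = J mod N.\<close>

lemma sum_atLeastLessThan_int_concat:
  fixes f :: "int \<Rightarrow> 'a::comm_monoid_add"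
  assumes "a \<le> b" "b \<le> c"
  shows "sum f {a..<b} + sum f {b..<c} = sum f {a..<c}"
  using assms by (simp add: sum.union_disjoint[symmetric] ivl_disj_un)

lemma sum_atLeastLessThan_int_snoc:
  fixes f :: "int \<Rightarrow> 'a::comm_monoid_add"
  assumes "a \<le> b"
  shows "sum f {a..<b + 1} = sum f {a..<b} + f b"
proof -
  have "{a..<b + 1} = insert b {a..<b}" using assms by auto
  then show ?thesis by (simp add: add.commute)
qed

lemma sum_atLeastLessThan_int_cons:
  fixes f :: "int \<Rightarrow> 'a::comm_monoid_add"
  assumes "a < b"
  shows "sum f {a..<b} = f a + sum f {a + 1..<b}"
proof -
  have "{a..<b} = insert a {a + 1..<b}" using assms by auto
  then show ?thesis by simp
qed

lemma sum_atLeastAtMost_int_shift: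
  fixes f :: "int \<Rightarrow> 'a::comm_monoid_add"
  shows "sum f {a + c..b + c} = sum (\<lambda>q. f (q + c)) {a..b}"
  by (rule sum.reindex_bij_witness[of _ "\<lambda>q. q + c" "\<lambda>q. q - c"]) auto

lemma sum_periodic_window:
  fixes f :: "int \<Rightarrow> 'a::cancel_comm_monoid_add"
  assumes periodic: "\<And>q. f (q + int n) = f q"
  shows "sum f {a..<a + int n} = sum f {0..<int n}"
proof -
  define F where "F a = sum f {a..<a + int n}" for a
  have F_succ: "F (a + 1) = F a" for a
  proof -
    have "F a + f (a + int n) = f a + F (a + 1)"
      unfolding F_def
      using sum_atLeastLessThan_int_snoc[of a "a + int n" f]
        sum_atLeastLessThan_int_cons[of a "a + int n + 1" f]
      by (simp add: ac_simps)
    then show ?thesis using periodic[of a] by (metis add.commute add_left_imp_eq)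
  qed
  have "F a = F 0"
  proof (induction a rule: int_induct[where k = 0])
    case (step2 i)
    then show ?case using F_succ[of "i - 1"] by simp
  qed (use F_succ in simp_all)
  then show ?thesis unfolding F_def by simp
qed

lemma sum_periodic_periods:
  fixes f :: "int \<Rightarrow> 'a::comm_semiring_1_cancel"
  assumes periodic: "\<And>q. f (q + int n) = f q"
  shows "sum f {a..<a + int n * int m} = of_nat m * sum f {0..<int n}"
proof (induction m)
  case (Suc m)
  have "sum f {a..<a + int n * int (Suc m)}
      = sum f {a..<a + int n * int m} + sum f {a + int n * int m..<a + int n * int m + int n}"
    using sum_atLeastLessThan_int_concat[of a "a + int n * int m" "a + int n * int (Suc m)" f]
    by (simp add: algebra_simps)
  then show ?case
    using Suc sum_periodic_window[of f n "a + int n * int m", OF periodic]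
    by (simp add: algebra_simps)
qed simp

lemma telescoping_lower_bound:
  fixes f h :: "int \<Rightarrow> 'a::ordered_comm_monoid_add"
  assumes step: "\<And>q. f q + h q \<le> f (q + 1)" and "i \<le> r"
  shows "f i + sum h {i..<r} \<le> f r"
  using \<open>i \<le> r\<close>
proof (induction r rule: int_ge_induct)
  case (step r)
  have "f i + sum h {i..<r + 1} = (f i + sum h {i..<r}) + h r"
    using sum_atLeastLessThan_int_snoc[OF step.hyps, of h] by (simp add: add.assoc)
  also have "\<dots> \<le> f r + h r" using step.IH by (rule add_right_mono)
  also have "\<dots> \<le> f (r + 1)" by (rule assms(1))
  finally show ?case .
qed simp

lemma strict_mono_int_succI:
  fixes f :: "int \<Rightarrow> 'a::order"
  assumes step: "\<And>k. f k < f (k + 1)"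
  shows "strict_mono f"
proof (rule strict_monoI)
  fix i r :: int
  assume "i < r"
  then have "i + 1 \<le> r" by simp
  then have "f (i + 1) \<le> f r"
  proof (induction r rule: int_ge_induct)
    case (step r)
    then show ?case using assms[of r] by (meson less_imp_le order_trans)
  qed simp
  then show "f i < f r" using step[of i] by (rule less_le_trans[rotated])
qed

lemma strict_mono_first_index_above:
  fixes f :: "int \<Rightarrow> 'a::linorder"
  assumes "strict_mono f" and below: "f K\<^sub>0 \<le> s" and above: "s \<le> f K\<^sub>1"
  obtains J where "s \<le> f J" "\<And>K. s \<le> f K \<Longrightarrow> J \<le> K"
proof
  have lower: "K\<^sub>0 \<le> K" if "s \<le> f K" for K
    using below that strict_mono_less[OF \<open>strict_mono f\<close>, of K K\<^sub>0]
    by (meson not_le order_less_le_trans)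
  define n where "n = (LEAST n. s \<le> f (K\<^sub>0 + int n))"
  have "s \<le> f (K\<^sub>0 + int (nat (K\<^sub>1 - K\<^sub>0)))"
    using above lower[OF above] by simp
  then show "s \<le> f (K\<^sub>0 + int n)"
    unfolding n_def by (rule LeastI)
  show "K\<^sub>0 + int n \<le> K" if "s \<le> f K" for K
  proof -
    have "s \<le> f (K\<^sub>0 + int (nat (K - K\<^sub>0)))" using that lower[OF that] by simp
    then have "n \<le> nat (K - K\<^sub>0)" unfolding n_def by (rule Least_le)
    then show ?thesis using lower[OF that] by linarith
  qed
qed

locale gate_control_list =
  fixes N :: nat and p C ell :: real and off L :: "nat \<Rightarrow> real"
  assumes C_pos: "C > 0" and N_pos: "N \<ge> 1" and ell_pos: "ell > 0"
    and off_first_nonneg: "0 \<le> off 0"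
    and off_increasing: "\<And>k. k + 1 < N \<Longrightarrow> off k < off (k + 1)"
    and off_last: "off (N - 1) < p"
    and L_nonneg: "\<And>k. k < N \<Longrightarrow> L k \<ge> 0"
    and window_before_next: "\<And>k. k + 1 < N \<Longrightarrow> off k + L k \<le> off (k + 1)"
    and last_window_before_next_period: "off (N - 1) + L (N - 1) \<le> off 0 + p"
    and windows_shorter_than_period: "(\<Sum>k<N. L k) < p"
begin

abbreviation "start \<equiv> oe N p off"
abbreviation "len \<equiv> Le N L"
abbreviation "guard \<equiv> LG N p off L C ell"
abbreviation "ST \<equiv> ST_set N p off L"
abbreviation "GB \<equiv> GB_set N p off L C ell"
abbreviation "Ltot \<equiv> (\<Sum>k<N. L k)"
abbreviation "non_ST_time s t \<equiv> t - measure lebesgue (ST \<inter> {s..s + t})"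

text \<open>The hypothesis p > 0 of the theorem follows from the others.\<close>

lemma p_pos: "p > 0"
  using windows_shorter_than_period sum_nonneg[of "{..<N}" L] L_nonneg by fastforce

lemma oe_residue: "r < N \<Longrightarrow> start (int r + int N * d) = off r + p * of_int d"
  unfolding oe_def using N_pos by simp

lemma Le_residue: "r < N \<Longrightarrow> len (int r + int N * d) = L r"
  unfolding Le_def using N_pos by simp

lemma int_residue_cases:
  obtains r d where "r < N" "q = int r + int N * d"
proof
  show "nat (q mod int N) < N" using N_pos by (simp add: nat_less_iff)
  show "q = int (nat (q mod int N)) + int N * (q div int N)" using N_pos by simp
qed

lemma oe_period_shift: "start (q + int N * m) = start q + p * of_int m"
  unfolding oe_def using N_pos by (simp add: algebra_simps)

lemma Le_period_shift: "len (q + int N * m) = len q"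
  unfolding Le_def by simp

lemma LG_period_shift: "guard (q + int N * m) = guard q"
proof -
  have "q + int N * m - 1 = (q - 1) + int N * m" by simp
  then show ?thesis unfolding LG_def by (simp only: oe_period_shift Le_period_shift)
qed

lemma Le_nonneg: "len q \<ge> 0"
  unfolding Le_def using L_nonneg N_pos by (simp add: nat_less_iff)

lemma window_step: "start q + len q \<le> start (q + 1)" "start q < start (q + 1)"
proof -
  obtain r d where r: "r < N" and q: "q = int r + int N * d" by (rule int_residue_cases)
  have start_q: "start q = off r + p * of_int d" and len_q: "len q = L r"
    unfolding q using r by (simp_all only: oe_residue Le_residue)
  have "start q + len q \<le> start (q + 1) \<and> start q < start (q + 1)"
  proof (cases "r + 1 < N")
    case True
    have "start (q + 1) = off (r + 1) + p * of_int d"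
      using oe_residue[OF True, of d] q by (simp add: add_ac)
    then show ?thesis using start_q len_q True window_before_next off_increasing by simp
  next
    case False
    then have r_last: "r = N - 1" using r by simp
    have "q + 1 = int 0 + int N * (d + 1)" using q r_last N_pos by (simp add: algebra_simps)
    then have "start (q + 1) = off 0 + p * of_int (d + 1)" using oe_residue[of 0] N_pos by simp
    then show ?thesis
      using start_q len_q r_last last_window_before_next_period off_last off_first_nonneg
      by (simp add: algebra_simps)
  qed
  then show "start q + len q \<le> start (q + 1)" "start q < start (q + 1)" by auto
qed

lemma strict_mono_oe: "strict_mono start"
  by (rule strict_mono_int_succI) (rule window_step(2))

lemma oe_plus_lengths_le: "i \<le> r \<Longrightarrow> start i + sum len {i..<r} \<le> start r"
  by (rule telescoping_lower_bound) (rule window_step(1))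

lemma LG_nonneg: "guard q \<ge> 0"
  unfolding LG_def using window_step(1)[of "q - 1"] C_pos ell_pos by simp

lemma lengths_period_window: "sum len {a..<a + int N} = Ltot"
proof -
  have "sum len {a..<a + int N} = sum len (int ` {0..<N})"
    using sum_periodic_window[of len N a] Le_period_shift[of _ 1]
    by (simp add: image_int_atLeastLessThan)
  also have "\<dots> = Ltot" by (simp add: sum.reindex Le_def atLeast0LessThan)
  finally show ?thesis .
qed

lemma lengths_periods: "sum len {a..<a + int N * int m} = of_nat m * Ltot"
  using sum_periodic_periods[of len N a m] Le_period_shift[of _ 1] lengths_period_window[of 0]
  by simp

text \<open>alpha J x is alpha_(GB,J) for an arbitrary integer start index J; copy_bound J x k is
  the ceiling in its k-th summand, which bounds how many periodic copies of guard band k can be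
  met when x is the available non-ST time.\<close>

definition copy_bound :: "int \<Rightarrow> real \<Rightarrow> int \<Rightarrow> int" where
  "copy_bound J x k =
     \<lceil>(x - (start k - start J) + guard k + sum len {J..k}) / (p - Ltot)\<rceil>"

definition alpha :: "int \<Rightarrow> real \<Rightarrow> real" where
  "alpha J x = (\<Sum>k\<in>{J..J + int N - 1}. guard k * C * of_int (copy_bound J x k))"

lemma alpha_GB_eq_alpha: "alpha_GB N p off L C ell j x = alpha (int j) x"
proof -
  have "{int j..int j + int N - 1} = {int j..<int j + int N}" by auto
  then have "sum len {int j..int j + int N - 1} = Ltot" using lengths_period_window by simp
  then show ?thesis unfolding alpha_GB_def alpha_def copy_bound_def by simp
qed

lemma copy_bound_period_shift:
  "copy_bound (J + int N * m) x (k + int N * m) = copy_bound J x k"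
  unfolding copy_bound_def
  by (simp only: sum_atLeastAtMost_int_shift oe_period_shift LG_period_shift Le_period_shift) simp

lemma alpha_period_shift: "alpha (J + int N * m) x = alpha J x"
proof -
  have "{J + int N * m..J + int N * m + int N - 1} = {J + int N * m..(J + int N - 1) + int N * m}"
    by (simp add: algebra_simps)
  then show ?thesis
    unfolding alpha_def
    by (simp only: sum_atLeastAtMost_int_shift LG_period_shift copy_bound_period_shift)
qed

lemma ST_measurable: "ST \<in> sets lebesgue"
  unfolding ST_set_def by auto

lemma GB_measurable: "GB \<in> sets lebesgue"
  unfolding GB_set_def by auto

lemma measure_Icc_minus_ST:
  assumes "a \<le> b"
  shows "measure lebesgue ({a..b} - ST) = (b - a) - measure lebesgue (ST \<inter> {a..b})"
proof -
  have "measure lebesgue ({a..b} - ST \<inter> {a..b})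
      = measure lebesgue {a..b} - measure lebesgue (ST \<inter> {a..b})"
    by (rule measure_Diff) (use ST_measurable in \<open>auto simp: emeasure_lborel_Icc_eq\<close>)
  moreover have "{a..b} - ST \<inter> {a..b} = {a..b} - ST" by auto
  ultimately show ?thesis using assms by simp
qed

lemma non_ST_time_mono:
  assumes "s \<le> a" "a \<le> e" "e \<le> s + t"
  shows "(e - a) - measure lebesgue (ST \<inter> {a..e}) \<le> non_ST_time s t"
proof -
  have "measure lebesgue ({a..e} - ST) \<le> measure lebesgue ({s..s + t} - ST)"
  proof (rule measure_mono_fmeasurable)
    show "{a..e} - ST \<subseteq> {s..s + t} - ST" using assms by auto
    show "{a..e} - ST \<in> sets lebesgue" using ST_measurable by auto
    show "{s..s + t} - ST \<in> lmeasurable"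
      by (rule fmeasurableI2[of "{s..s + t}"]) (use ST_measurable in auto)
  qed
  then show ?thesis using measure_Icc_minus_ST[of a e] measure_Icc_minus_ST[of s "s + t"] assms
    by simp
qed

lemma ST_time_before_window_le:
  assumes "J \<le> K" "e < start K"
  shows "measure lebesgue (ST \<inter> {start J..e}) \<le> sum len {J..<K}"
proof -
  define W where "W q = {start q..<start q + len q}" for q
  have W_lmeasurable: "W q \<in> lmeasurable" for q
    unfolding W_def by (rule fmeasurableI2[of "{start q..start q + len q}"]) auto
  have "ST \<inter> {start J..e} \<subseteq> (\<Union>q\<in>{J..<K}. W q)"
  proof
    fix y assume y: "y \<in> ST \<inter> {start J..e}"
    then obtain q where q: "start q \<le> y" "y < start q + len q"
      unfolding ST_set_def by auto
    have "q < K"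
      using q y assms strict_mono_less_eq[OF strict_mono_oe, of K q] by force
    moreover have "J \<le> q"
    proof (rule ccontr)
      assume "\<not> J \<le> q"
      then have "start (q + 1) \<le> start J"
        using strict_mono_less_eq[OF strict_mono_oe] by simp
      then show False using q y window_step(1)[of q] by auto
    qed
    ultimately show "y \<in> (\<Union>q\<in>{J..<K}. W q)" unfolding W_def using q by auto
  qed
  then have "measure lebesgue (ST \<inter> {start J..e}) \<le> measure lebesgue (\<Union>q\<in>{J..<K}. W q)"
    by (rule measure_mono_fmeasurable)
      (use ST_measurable W_lmeasurable in \<open>auto intro: fmeasurable.finite_UN\<close>)
  also have "\<dots> \<le> (\<Sum>q\<in>{J..<K}. measure lebesgue (W q))"
    by (rule measure_UNION_le) (auto simp: W_def)
  also have "\<dots> = sum len {J..<K}"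
    unfolding W_def using Le_nonneg by simp
  finally show ?thesis .
qed

lemma non_ST_time_nonneg: "t \<ge> 0 \<Longrightarrow> non_ST_time s t \<ge> 0"
  using measure_Icc_minus_ST[of s "s + t"] measure_nonneg[of lebesgue "{s..s + t} - ST"] by simp

lemma guard_band_reached:
  assumes t: "t \<ge> 0" and J: "s \<le> start J"
    and K: "J \<le> K" "start K - guard K < s + t" "0 < guard K"
  shows "start K - guard K - start J - sum len {J..<K} < non_ST_time s t"
proof (cases "max (start K - guard K) (start J) < min (s + t) (start K)")
  case True
  then obtain e where e: "max (start K - guard K) (start J) < e" "e < min (s + t) (start K)"
    using dense by blast
  have "(e - start J) - measure lebesgue (ST \<inter> {start J..e}) \<le> non_ST_time s t"
    by (rule non_ST_time_mono) (use J e in auto)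
  moreover have "measure lebesgue (ST \<inter> {start J..e}) \<le> sum len {J..<K}"
    by (rule ST_time_before_window_le) (use K e in auto)
  ultimately show ?thesis using e by auto
next
  case False
  then have "start K - guard K < start J" using K by auto
  moreover have "sum len {J..<K} \<ge> 0" by (simp add: Le_nonneg sum_nonneg)
  ultimately show ?thesis using non_ST_time_nonneg[OF t, of s] by linarith
qed

lemma first_window_after:
  obtains J where "s \<le> start J" "\<And>K. s \<le> start K \<Longrightarrow> J \<le> K"
proof -
  define d where "d = \<lfloor>(s - off 0) / p\<rfloor>"
  have "start (int N * d) = off 0 + p * of_int d"
    using oe_residue[of 0 d] N_pos by simp
  moreover have "p * of_int d \<le> s - off 0" "s - off 0 < p * (of_int d + 1)"
    using floor_divide_lower[OF p_pos, of "s - off 0"] floor_divide_upper[OF p_pos, of "s - off 0"]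
    unfolding d_def by (simp_all add: algebra_simps)
  moreover have "start (int N * (d + 1)) = off 0 + p * (of_int d + 1)"
    using oe_residue[of 0 "d + 1"] N_pos by simp
  ultimately have "start (int N * d) \<le> s" "s \<le> start (int N * (d + 1))" by auto
  then show ?thesis using strict_mono_first_index_above[OF strict_mono_oe] that by blast
qed

lemma copy_bound_nonneg:
  assumes x: "x \<ge> 0" and k: "J \<le> k" "k \<le> J + int N - 1"
  shows "copy_bound J x k \<ge> 0"
proof -
  have "sum len {J..<k + 1} + sum len {k + 1..<J + int N} = Ltot"
    using sum_atLeastLessThan_int_concat[of J "k + 1" "J + int N" len] k lengths_period_window[of J]
    by simp
  moreover have "sum len {J..<k + 1} = sum len {J..k}"
    by (simp add: atLeastLessThanPlusOne_atLeastAtMost_int)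
  moreover have "start (k + 1) + sum len {k + 1..<J + int N} \<le> start J + p"
    using oe_plus_lengths_le[of "k + 1" "J + int N"] oe_period_shift[of J 1] k by simp
  moreover have "start k < start (k + 1)" by (rule window_step(2))
  ultimately have "x - (start k - start J) + guard k + sum len {J..k} > -(p - Ltot)"
    using x LG_nonneg[of k] by linarith
  then have "(x - (start k - start J) + guard k + sum len {J..k}) / (p - Ltot) > -1"
    using windows_shorter_than_period by (simp add: divide_simps)
  then show ?thesis unfolding copy_bound_def by linarith
qed

definition meeting_guards :: "real \<Rightarrow> real \<Rightarrow> int set" where
  "meeting_guards s t = {K. s < start K \<and> start K - guard K < s + t \<and> 0 < guard K}"

lemma GB_time_le_meeting_guards:
  assumes "finite (meeting_guards s t)"
  shows "measure lebesgue (GB \<inter> {s..s + t}) \<le> sum guard (meeting_guards s t)"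
proof -
  define B where "B K = {start K - guard K..<start K}" for K
  have B_lmeasurable: "B K \<in> lmeasurable" for K
    unfolding B_def by (rule fmeasurableI2[of "{start K - guard K..start K}"]) auto
  have "GB \<inter> {s..s + t} \<subseteq> (\<Union>K\<in>meeting_guards s t. B K) \<union> {s + t}"
  proof
    fix z assume z: "z \<in> GB \<inter> {s..s + t}"
    then obtain K where K: "start K - guard K \<le> z" "z < start K" unfolding GB_set_def by auto
    show "z \<in> (\<Union>K\<in>meeting_guards s t. B K) \<union> {s + t}"
    proof (cases "z = s + t")
      case False
      with z K have "K \<in> meeting_guards s t" unfolding meeting_guards_def by auto
      with K show ?thesis unfolding B_def by auto
    qed simp
  qed
  then have "measure lebesgue (GB \<inter> {s..s + t})
      \<le> measure lebesgue ((\<Union>K\<in>meeting_guards s t. B K) \<union> {s + t})"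
  proof (rule measure_mono_fmeasurable)
    show "GB \<inter> {s..s + t} \<in> sets lebesgue" using GB_measurable by auto
    show "(\<Union>K\<in>meeting_guards s t. B K) \<union> {s + t} \<in> lmeasurable"
    proof (rule fmeasurable.Un)
      show "(\<Union>K\<in>meeting_guards s t. B K) \<in> lmeasurable"
        using assms B_lmeasurable by (rule fmeasurable.finite_UN)
      show "{s + t} \<in> lmeasurable"
        using lmeasurable_interval(1)[of "s + t" "s + t"] by simp
    qed
  qed
  also have "\<dots> = measure lebesgue (\<Union>K\<in>meeting_guards s t. B K)"
    by (rule measure_Un_null_set)
      (use assms in \<open>auto simp: B_def negligible_iff_null_sets[symmetric]\<close>)
  also have "\<dots> \<le> (\<Sum>K\<in>meeting_guards s t. measure lebesgue (B K))"
    by (rule measure_UNION_le) (use assms in \<open>auto simp: B_def\<close>)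
  also have "\<dots> = sum guard (meeting_guards s t)"
    unfolding B_def using LG_nonneg by simp
  finally show ?thesis .
qed

context
  fixes s t :: real and J :: int
  assumes t_nonneg: "t \<ge> 0"
    and J_first: "s \<le> start J" "\<And>K. s \<le> start K \<Longrightarrow> J \<le> K"
begin

abbreviation "residues \<equiv> {J..J + int N - 1}"
abbreviation "copies k \<equiv> copy_bound J (non_ST_time s t) k"

lemma meeting_guards_subset:
  "meeting_guards s t \<subseteq> (\<lambda>(k, m). k + int N * int m) `
     (SIGMA k:residues. {..<nat (copies k)})"
proof
  fix K assume K: "K \<in> meeting_guards s t"
  have "J \<le> K" using J_first(2) K unfolding meeting_guards_def by auto
  define k where "k = J + (K - J) mod int N"
  define m where "m = (K - J) div int N"
  have m_nonneg: "m \<ge> 0"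
    unfolding m_def using \<open>J \<le> K\<close> N_pos by (simp add: pos_imp_zdiv_nonneg_iff)
  have K_eq: "K = k + int N * m" unfolding k_def m_def by simp
  have k: "J \<le> k" "k \<le> J + int N - 1" unfolding k_def using N_pos by simp_all
  have "start K - guard K - start J - sum len {J..<K} < non_ST_time s t"
    by (rule guard_band_reached)
      (use t_nonneg J_first \<open>J \<le> K\<close> K in \<open>auto simp: meeting_guards_def\<close>)
  moreover have "start K = start k + p * of_int m" "guard K = guard k"
    unfolding K_eq by (rule oe_period_shift, rule LG_period_shift)
  moreover have "sum len {J..<K} = sum len {J..<k} + of_int m * Ltot"
    using sum_atLeastLessThan_int_concat[of J k K len] lengths_periods[of k "nat m"] k m_nonneg K_eq
    by simp
  moreover have "sum len {J..k} = sum len {J..<k} + len k"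
    using sum_atLeastLessThan_int_snoc[OF k(1), of len]
    by (simp add: atLeastLessThanPlusOne_atLeastAtMost_int)
  ultimately have
    "of_int m * (p - Ltot) < non_ST_time s t - (start k - start J) + guard k + sum len {J..k}"
    using Le_nonneg[of k] by (simp add: algebra_simps)
  then have "m < copies k"
    unfolding copy_bound_def using windows_shorter_than_period
    by (simp add: pos_less_divide_eq less_ceiling_iff)
  then have "nat m < nat (copies k)" using m_nonneg by simp
  then show "K \<in> (\<lambda>(k, m). k + int N * int m) ` (SIGMA k:residues. {..<nat (copies k)})"
    using k K_eq m_nonneg by (auto intro!: image_eqI[where x = "(k, nat m)"])
qed

lemma sum_meeting_guards_le:
  "sum guard (meeting_guards s t) \<le> (\<Sum>k\<in>residues. guard k * of_int (copies k))"
proof -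
  define I where "I = (SIGMA k:residues. {..<nat (copies k)})"
  have "sum guard (meeting_guards s t) \<le> sum guard ((\<lambda>(k, m). k + int N * int m) ` I)"
    by (rule sum_mono2) (use meeting_guards_subset LG_nonneg in \<open>auto simp: I_def\<close>)
  also have "\<dots> \<le> (\<Sum>(k, m)\<in>I. guard (k + int N * int m))"
    using sum_image_le[of I guard "\<lambda>(k, m). k + int N * int m"] LG_nonneg
    by (auto simp: I_def comp_def prod.case_distrib)
  also have "\<dots> = (\<Sum>k\<in>residues. \<Sum>m<nat (copies k). guard (k + int N * int m))"
    unfolding I_def by (rule sum.Sigma[symmetric]) auto
  also have "\<dots> = (\<Sum>k\<in>residues. guard k * of_nat (nat (copies k)))"
    by (simp only: LG_period_shift sum_constant card_lessThan) (simp add: mult.commute)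
  also have "\<dots> = (\<Sum>k\<in>residues. guard k * of_int (copies k))"
    using copy_bound_nonneg[OF non_ST_time_nonneg[OF t_nonneg]] by (intro sum.cong) auto
  finally show ?thesis .
qed

lemma GB_time_le_alpha: "C * measure lebesgue (GB \<inter> {s..s + t}) \<le> alpha J (non_ST_time s t)"
proof -
  have "finite (meeting_guards s t)"
    using meeting_guards_subset by (rule finite_subset) auto
  then have "C * measure lebesgue (GB \<inter> {s..s + t}) \<le> C * sum guard (meeting_guards s t)"
    using GB_time_le_meeting_guards C_pos by simp
  also have "\<dots> \<le> C * (\<Sum>k\<in>residues. guard k * of_int (copies k))"
    using sum_meeting_guards_le C_pos by (simp add: mult_le_cancel_left_pos)
  also have "\<dots> = alpha J (non_ST_time s t)"
    unfolding alpha_def sum_distrib_left by (simp add: mult_ac)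
  finally show ?thesis .
qed

end

end

theorem theorem4:
  fixes N :: nat and p C ell :: real and off L :: "nat \<Rightarrow> real" and s t :: real
  assumes "C > 0" and "p > 0" and "N \<ge> 1" and "ell > 0"
    and "0 \<le> off 0"
    and "\<And>k. k + 1 < N \<Longrightarrow> off k < off (k + 1)"
    and "off (N - 1) < p"
    and "\<And>k. k < N \<Longrightarrow> L k \<ge> 0"
    and "\<And>k. k + 1 < N \<Longrightarrow> off k + L k \<le> off (k + 1)"
    and "off (N - 1) + L (N - 1) \<le> off 0 + p"
    and "p > (\<Sum>k<N. L k)"
    and "t \<ge> 0"
  shows "C * dt_GB N p off L C ell s (s + t)
           \<le> Max ((\<lambda>j. alpha_GB N p off L C ell j (t - dt_ST N p off L s (s + t))) ` {0..<N})"
proof -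
  interpret gate_control_list N p C ell off L
    by unfold_locales (use assms in auto)
  obtain J where J: "s \<le> oe N p off J" "\<And>K. s \<le> oe N p off K \<Longrightarrow> J \<le> K"
    using first_window_after[of s] by blast
  define j where "j = nat (J mod int N)"
  have j: "j \<in> {0..<N}" and J_eq: "J = int j + int N * (J div int N)"
    unfolding j_def using assms(3) by (simp_all add: nat_less_iff)
  have "C * dt_GB N p off L C ell s (s + t) \<le> alpha J (t - dt_ST N p off L s (s + t))"
    unfolding dt_GB_def dt_ST_def using assms(12) J by (rule GB_time_le_alpha)
  also have "\<dots> = alpha_GB N p off L C ell j (t - dt_ST N p off L s (s + t))"
    by (subst J_eq) (simp only: alpha_period_shift alpha_GB_eq_alpha)
  also have "\<dots> \<le> Max ((\<lambda>j. alpha_GB N p off L C ell j (t - dt_ST N p off L s (s + t))) ` {0..<N})"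
    by (rule Max_ge) (use j in auto)
  finally show ?thesis .
qed

end
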